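(* Let $A=KQ/I$ be a finite-dimensional gentle algebra and let $C=c_1\cdots c_m$ be a string for $A$ with an intersecting auto-reaching given by substrings $C[i,j]$ and $C[i',j']$ with $i<i'\le j<j'$. Then $C[i,i']$ is cyclically equivalent to $C[j,j']$, and $C[i,j]$ is a substring of $(C[i,i'])^\infty$, i.e. the word $c_i\cdots c_{j-1}$ is a consecutive subword of the infinite periodic word obtained by repeating $c_i\cdots c_{i'-1}$.
   Context: Letters are arrows $\alpha\in Q_1$ (direct, traversed from $s(\alpha)$ to $t(\alpha)$) and formal inverses $\alpha^{-1}$ (inverse, traversed from $t(\alpha)$ to $s(\alpha)$). A string is a reduced walk in $Q$ avoiding the relations of $I$ and their inverses; it is identified with its inverse walk. For $C=c_1\cdots c_m$ with vertex positions $v_1,\dots,v_{m+1}$ and $1\le i\le j\le m+1$, $C[i,j]=c_i\cdots c_{j-1}$ (trivial if $i=j$). $C[i,j]$ is on top of $C$ if ($i=1$ or $c_{i-1}$ is inverse) and ($j=m+1$ or $c_j$ is direct); at the bottom if ($i=1$ or $c_{i-1}$ is direct) and ($j=m+1$ or $c_j$ is inverse). An auto-reaching of $C$ is given by a substring on top and a substring at the bottom of $C$ which are equal as strings (equal or mutually inverse walks) and satisfy the swinging arms condition: writing the top one as $C[i_0,j_0]$ and the bottom one as $C[i_0',j_0']$, if $i_0'=1$ then $i_0\ne1$, and if $j_0'=m+1$ then $j_0\ne m+1$. It is intersecting if the two substrings $C[i,j]$, $C[i',j']$ satisfy $i<i'\le j<j'$ or $i'<i\le j'<j$. Two words $\alpha_1\cdots\alpha_k$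 and $\beta_1\cdots\beta_k$ are cyclically equivalent if $\beta_1\cdots\beta_k=\alpha_{r+1}\cdots\alpha_k\alpha_1\cdots\alpha_r$ for some $0\le r<k$. *)

theory Defs
  imports Main
begin

text \<open>A bound quiver (Q,I) with Q = (Q0, Q1, s, t) and I generated by a set R of
  paths of length two; a pair (a,b) in R stands for the path "a then b"
  (so t a = s b).\<close>

datatype 'a letter = Dir 'a | Inv 'a

fun arr :: "'a letter \<Rightarrow> 'a" where
  "arr (Dir a) = a" | "arr (Inv a) = a"

fun is_dir :: "'a letter \<Rightarrow> bool" where
  "is_dir (Dir a) = True" | "is_dir (Inv a) = False"

fun is_inv :: "'a letter \<Rightarrow> bool" where
  "is_inv (Dir a) = False" | "is_inv (Inv a) = True"

fun linv :: "'a letter \<Rightarrow> 'a letter" where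
  "linv (Dir a) = Inv a" | "linv (Inv a) = Dir a"

fun lsrc :: "('a \<Rightarrow> 'v) \<Rightarrow> ('a \<Rightarrow> 'v) \<Rightarrow> 'a letter \<Rightarrow> 'v" where
  "lsrc s t (Dir a) = s a" | "lsrc s t (Inv a) = t a"

fun ltgt :: "('a \<Rightarrow> 'v) \<Rightarrow> ('a \<Rightarrow> 'v) \<Rightarrow> 'a letter \<Rightarrow> 'v" where
  "ltgt s t (Dir a) = t a" | "ltgt s t (Inv a) = s a"

definition rel_free_path ::
  "'a set \<Rightarrow> ('a \<Rightarrow> 'v) \<Rightarrow> ('a \<Rightarrow> 'v) \<Rightarrow> ('a \<times> 'a) set \<Rightarrow> 'a list \<Rightarrow> bool" where
  "rel_free_path Q1 s t R p \<longleftrightarrow>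
     set p \<subseteq> Q1 \<and>
     (\<forall>k. Suc k < length p \<longrightarrow> t (p ! k) = s (p ! Suc k) \<and> (p ! k, p ! Suc k) \<notin> R)"

text \<open>Finite-dimensionality of
  KQ/I (with Q finite, I generated by paths of length 2) means that there are only
  finitely many paths not in I, i.e. the lengths of relation-free paths are bounded.\<close>
definition gentle ::
  "'v set \<Rightarrow> 'a set \<Rightarrow> ('a \<Rightarrow> 'v) \<Rightarrow> ('a \<Rightarrow> 'v) \<Rightarrow> ('a \<times> 'a) set \<Rightarrow> bool" where
  "gentle Q0 Q1 s t R \<longleftrightarrow>
     finite Q0 \<and> finite Q1 \<and>
     (\<forall>a\<in>Q1. s a \<in> Q0 \<and> t a \<in> Q0) \<and>
     R \<subseteq> {(a, b). a \<in> Q1 \<and> b \<in> Q1 \<and> t a = s b} \<and>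
     (\<forall>v\<in>Q0. card {a\<in>Q1. s a = v} \<le> 2 \<and> card {a\<in>Q1. t a = v} \<le> 2) \<and>
     (\<forall>b\<in>Q1. card {a\<in>Q1. t a = s b \<and> (a, b) \<in> R} \<le> 1 \<and>
              card {a\<in>Q1. t a = s b \<and> (a, b) \<notin> R} \<le> 1) \<and>
     (\<forall>a\<in>Q1. card {b\<in>Q1. t a = s b \<and> (a, b) \<in> R} \<le> 1 \<and>
              card {b\<in>Q1. t a = s b \<and> (a, b) \<notin> R} \<le> 1) \<and>
     (\<exists>N. \<forall>p. rel_free_path Q1 s t R p \<longrightarrow> length p \<le> N)"

text \<open>A string: a walk starting at vertex v with letters C, reduced and avoiding
  the relations and their inverses.  (Trivial strings: C = [] at vertex v.)\<close>
definition is_string ::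
  "'v set \<Rightarrow> 'a set \<Rightarrow> ('a \<Rightarrow> 'v) \<Rightarrow> ('a \<Rightarrow> 'v) \<Rightarrow> ('a \<times> 'a) set \<Rightarrow> 'v \<Rightarrow> 'a letter list \<Rightarrow> bool" where
  "is_string Q0 Q1 s t R v C \<longleftrightarrow>
     v \<in> Q0 \<and> arr ` set C \<subseteq> Q1 \<and>
     (C \<noteq> [] \<longrightarrow> lsrc s t (C ! 0) = v) \<and>
     (\<forall>k. Suc k < length C \<longrightarrow>
        ltgt s t (C ! k) = lsrc s t (C ! Suc k) \<and>
        C ! Suc k \<noteq> linv (C ! k) \<and>
        \<not> (\<exists>a b. C ! k = Dir a \<and> C ! Suc k = Dir b \<and> (a, b) \<in> R) \<and>
        \<not> (\<exists>a b. C ! k = Inv b \<and> C ! Suc k = Inv a \<and> (a, b) \<in> R))"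

text \<open>Vertex positions v_1, ..., v_(m+1) (1-indexed).\<close>
definition vpos :: "('a \<Rightarrow> 'v) \<Rightarrow> ('a \<Rightarrow> 'v) \<Rightarrow> 'v \<Rightarrow> 'a letter list \<Rightarrow> nat \<Rightarrow> 'v" where
  "vpos s t v C k = (if k \<le> 1 then v else ltgt s t (C ! (k - 2)))"

text \<open>The word c_i ... c_(j-1) (1-indexed).\<close>
definition subword :: "'a letter list \<Rightarrow> nat \<Rightarrow> nat \<Rightarrow> 'a letter list" where
  "subword C i j = take (j - i) (drop (i - 1) C)"

definition substr :: "('a \<Rightarrow> 'v) \<Rightarrow> ('a \<Rightarrow> 'v) \<Rightarrow> 'v \<Rightarrow> 'a letter list \<Rightarrow> nat \<Rightarrow> nat
    \<Rightarrow> 'v \<times> 'a letter list" where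
  "substr s t v C i j = (vpos s t v C i, subword C i j)"

definition walk_end :: "('a \<Rightarrow> 'v) \<Rightarrow> ('a \<Rightarrow> 'v) \<Rightarrow> 'v \<times> 'a letter list \<Rightarrow> 'v" where
  "walk_end s t w = (if snd w = [] then fst w else ltgt s t (last (snd w)))"

definition walk_inv :: "('a \<Rightarrow> 'v) \<Rightarrow> ('a \<Rightarrow> 'v) \<Rightarrow> 'v \<times> 'a letter list \<Rightarrow> 'v \<times> 'a letter list" where
  "walk_inv s t w = (walk_end s t w, rev (map linv (snd w)))"

definition eq_as_strings :: "('a \<Rightarrow> 'v) \<Rightarrow> ('a \<Rightarrow> 'v) \<Rightarrow> 'v \<times> 'a letter list
    \<Rightarrow> 'v \<times> 'a letter list \<Rightarrow> bool" where
  "eq_as_strings s t w w' \<longleftrightarrow> w = w' \<or> w = walk_inv s t w'"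

definition valid_pos :: "'a letter list \<Rightarrow> nat \<Rightarrow> nat \<Rightarrow> bool" where
  "valid_pos C i j \<longleftrightarrow> 1 \<le> i \<and> i \<le> j \<and> j \<le> length C + 1"

definition on_top :: "'a letter list \<Rightarrow> nat \<Rightarrow> nat \<Rightarrow> bool" where
  "on_top C i j \<longleftrightarrow> valid_pos C i j \<and>
     (i = 1 \<or> is_inv (C ! (i - 2))) \<and> (j = length C + 1 \<or> is_dir (C ! (j - 1)))"

definition at_bottom :: "'a letter list \<Rightarrow> nat \<Rightarrow> nat \<Rightarrow> bool" where
  "at_bottom C i j \<longleftrightarrow> valid_pos C i j \<and>
     (i = 1 \<or> is_dir (C ! (i - 2))) \<and> (j = length C + 1 \<or> is_inv (C ! (j - 1)))"

definition auto_reaching :: "('a \<Rightarrow> 'v) \<Rightarrow> ('a \<Rightarrow> 'v) \<Rightarrow> 'v \<Rightarrow> 'a letter list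
    \<Rightarrow> nat \<Rightarrow> nat \<Rightarrow> nat \<Rightarrow> nat \<Rightarrow> bool" where
  "auto_reaching s t v C i0 j0 i0' j0' \<longleftrightarrow>
     on_top C i0 j0 \<and> at_bottom C i0' j0' \<and>
     eq_as_strings s t (substr s t v C i0 j0) (substr s t v C i0' j0') \<and>
     (i0' = 1 \<longrightarrow> i0 \<noteq> 1) \<and> (j0' = length C + 1 \<longrightarrow> j0 \<noteq> length C + 1)"

definition cyc_equiv :: "'b list \<Rightarrow> 'b list \<Rightarrow> bool" where
  "cyc_equiv a b \<longleftrightarrow> length a = length b \<and>
     (\<exists>r. (r < length a \<or> (a = [] \<and> r = 0)) \<and> b = drop r a @ take r a)"

definition subword_of_power_inf :: "'b list \<Rightarrow> 'b list \<Rightarrow> bool" where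
  "subword_of_power_inf w p \<longleftrightarrow> p \<noteq> [] \<and>
     (\<exists>off. \<forall>n < length w. w ! n = p ! ((off + n) mod length p))"

end

theory Submission
  imports Defs
begin

(* Write X = C[i,j] and Y = C[i',j']: both have length n = j - i and they are the prefix and
   the suffix of the word w = C[i,j'], shifted against each other by d = i' - i, where
   0 < d \<le> n.  If X were the inverse of Y, the reflection k \<mapsto> n + d - 1 - k of w would send
   each letter of the prefix to the inverse of its image; its central position (or pair of
   positions) then gives a letter equal to its own inverse or two consecutive mutually inverse
   letters, which a reduced walk cannot contain.  Hence X = Y, so w has period d.  Then
   C[i,i'] = take d w, the tail C[j,j'] = drop n w is a rotation of it, and X = take n w is a
   prefix of the periodic word. *)

lemma linv_linv [simp]: "linv (linv x) = x"
  by (cases x) auto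

lemma linv_neq_self [simp]: "linv x \<noteq> x"
  by (cases x) auto

lemma inverse_word_eq_iff: "xs = rev (map linv ys) \<longleftrightarrow> ys = rev (map linv xs)"
  by (auto simp: rev_map comp_def)

definition reduced :: "'a letter list \<Rightarrow> bool" where
  "reduced w \<longleftrightarrow> (\<forall>k. Suc k < length w \<longrightarrow> w ! Suc k \<noteq> linv (w ! k))"

lemma reduced_if_is_string: "is_string Q0 Q1 s t R v C \<Longrightarrow> reduced C"
  unfolding is_string_def reduced_def by blast

lemma reduced_subword: "reduced C \<Longrightarrow> reduced (subword C i j)"
  unfolding reduced_def subword_def by auto

definition has_period :: "'b list \<Rightarrow> nat \<Rightarrow> bool" where
  "has_period w d \<longleftrightarrow> (\<forall>k. k + d < length w \<longrightarrow> w ! (k + d) = w ! k)"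

lemma has_period_if_take_eq_drop:
  assumes "take n w = drop d w"
  shows "has_period w d"
  unfolding has_period_def
proof (intro allI impI)
  fix k assume "k + d < length w"
  then have "k < length (take n w)"
    unfolding assms by simp
  then have "w ! k = take n w ! k"
    by simp
  also have "\<dots> = w ! (k + d)"
    unfolding assms using \<open>k + d < length w\<close> by (simp add: add.commute)
  finally show "w ! (k + d) = w ! k" ..
qed

lemma has_period_nth_mod:
  assumes "has_period w d" and "k < length w"
  shows "w ! k = w ! (k mod d)"
  using assms(2)
proof (induction k rule: less_induct)
  case (less k)
  show ?case
  proof (cases "0 < d \<and> d \<le> k")
    case True
    then have "w ! k = w ! (k - d)"
      using assms(1) less.prems unfolding has_period_def by (metis le_add_diff_inverse2)
    also have "\<dots> = w ! ((k - d) mod d)"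
      using less True by simp
    finally show ?thesis
      using True by (simp add: le_mod_geq)
  qed auto
qed

lemma drop_eq_rotate_take_if_has_period:
  assumes "has_period w d" and "length w = n + d"
  shows "drop n w = rotate n (take d w)"
proof (rule nth_equalityI)
  show "length (drop n w) = length (rotate n (take d w))"
    using assms(2) by simp
next
  fix m assume "m < length (drop n w)"
  then have "m < d"
    using assms(2) by simp
  then have "drop n w ! m = w ! ((m + n) mod d)"
    using has_period_nth_mod[OF assms(1)] assms(2) by (simp add: add.commute)
  also have "\<dots> = rotate n (take d w) ! m"
    using \<open>m < d\<close> assms(2) by (simp add: nth_rotate add.commute)
  finally show "drop n w ! m = rotate n (take d w) ! m" .
qed

lemma cyc_equiv_rotate: "cyc_equiv xs (rotate n xs)"
  unfolding cyc_equiv_def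
  by (cases "xs = []") (auto intro!: exI[of _ "n mod length xs"] simp: rotate_drop_take)

lemma subword_of_power_inf_take_if_has_period:
  assumes "has_period w d" and "0 < d" and "d \<le> length w" and "n \<le> length w"
  shows "subword_of_power_inf (take n w) (take d w)"
  unfolding subword_of_power_inf_def
proof (intro conjI exI[of _ 0] allI impI)
  show "take d w \<noteq> []"
    using assms(2,3) by auto
next
  fix k assume "k < length (take n w)"
  then show "take n w ! k = take d w ! ((0 + k) mod length (take d w))"
    using has_period_nth_mod[OF assms(1)] assms by simp
qed

lemma reduced_prefix_neq_inverse_of_suffix:
  assumes "reduced w" and "length w = n + d" and "0 < d" and "d \<le> n"
  shows "take n w \<noteq> rev (map linv (drop d w))"
proof
  assume inverse: "take n w = rev (map linv (drop d w))"
  define T where "T = n + d - 1"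
  have reflect: "w ! k = linv (w ! (T - k))" if "k < n" for k
  proof -
    have "w ! k = take n w ! k"
      using that by simp
    also have "\<dots> = linv (w ! (d + (n - 1 - k)))"
      using that assms(2) by (simp add: inverse rev_nth)
    finally show ?thesis
      using that T_def by (simp add: algebra_simps)
  qed
  define c where "c = T div 2"
  have "c < n"
    using assms(3,4) unfolding T_def c_def by presburger
  have "T - c = c \<or> T - c = Suc c"
    unfolding c_def by presburger
  then show False
  proof
    assume "T - c = c"
    then show False
      using reflect[OF \<open>c < n\<close>] by (metis linv_neq_self)
  next
    assume "T - c = Suc c"
    then have "w ! Suc c = linv (w ! c)"
      using reflect[OF \<open>c < n\<close>] by simp
    moreover have "Suc c < length w"
      using \<open>c < n\<close> assms(2,3) by simp
    ultimately show False
      using assms(1) unfolding reduced_def by blast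
  qed
qed

lemma reduced_overlap_periodic:
  assumes "reduced w" and "length w = n + d" and "0 < d" and "d \<le> n"
    and "take n w = drop d w \<or> take n w = rev (map linv (drop d w))"
  shows "cyc_equiv (take d w) (drop n w) \<and> subword_of_power_inf (take n w) (take d w)"
proof -
  have "has_period w d"
    using assms reduced_prefix_neq_inverse_of_suffix has_period_if_take_eq_drop by blast
  then show ?thesis
    using assms(2,3) subword_of_power_inf_take_if_has_period[OF \<open>has_period w d\<close>]
    by (simp add: drop_eq_rotate_take_if_has_period cyc_equiv_rotate)
qed

lemma take_subword: "k \<le> j \<Longrightarrow> take (k - i) (subword C i j) = subword C i k"
  unfolding subword_def by (simp add: min_def)

lemma drop_subword: "1 \<le> i \<Longrightarrow> i \<le> k \<Longrightarrow> drop (k - i) (subword C i j) = subword C k j"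
  unfolding subword_def by (simp add: drop_take algebra_simps)

lemma length_subword: "valid_pos C i j \<Longrightarrow> length (subword C i j) = j - i"
  unfolding subword_def valid_pos_def by auto

lemma auto_reaching_valid_pos:
  "auto_reaching s t v C i0 j0 i0' j0' \<Longrightarrow> valid_pos C i0 j0 \<and> valid_pos C i0' j0'"
  unfolding auto_reaching_def on_top_def at_bottom_def by blast

lemma auto_reaching_subword_eq:
  "auto_reaching s t v C i0 j0 i0' j0' \<Longrightarrow>
   subword C i0 j0 = subword C i0' j0' \<or> subword C i0 j0 = rev (map linv (subword C i0' j0'))"
  unfolding auto_reaching_def eq_as_strings_def substr_def walk_inv_def by auto

lemma auto_reaching_either_way_subword_eq:
  assumes "auto_reaching s t v C i j i' j' \<or> auto_reaching s t v C i' j' i j"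
  shows "subword C i j = subword C i' j' \<or> subword C i j = rev (map linv (subword C i' j'))"
  using assms
proof
  assume "auto_reaching s t v C i' j' i j"
  then show ?thesis
    using auto_reaching_subword_eq inverse_word_eq_iff by metis
qed (rule auto_reaching_subword_eq)

theorem mainTheorem8:
  fixes Q0 :: "'v set" and Q1 :: "'a set" and s t :: "'a \<Rightarrow> 'v"
    and R :: "('a \<times> 'a) set" and v :: 'v and C :: "'a letter list"
    and i j i' j' :: nat
  assumes "gentle Q0 Q1 s t R"
    and "is_string Q0 Q1 s t R v C"
    and "auto_reaching s t v C i j i' j' \<or> auto_reaching s t v C i' j' i j"
    and "i < i'" and "i' \<le> j" and "j < j'"
  shows "cyc_equiv (subword C i i') (subword C j j') \<and>
         subword_of_power_inf (subword C i j) (subword C i i')"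
proof -
  have valid: "valid_pos C i j" "valid_pos C i' j'"
    using assms(3) by (auto dest: auto_reaching_valid_pos)
  have equal_or_inverse:
    "subword C i j = subword C i' j' \<or> subword C i j = rev (map linv (subword C i' j'))"
    using assms(3) by (rule auto_reaching_either_way_subword_eq)
  then have "j - i = j' - i'"
    using length_subword[OF valid(1)] length_subword[OF valid(2)] by auto
  define w where "w = subword C i j'"
  define n where "n = j - i"
  define d where "d = i' - i"
  have "1 \<le> i" "length w = n + d"
    using valid assms(4-6) \<open>j - i = j' - i'\<close> by (auto simp: w_def n_def d_def valid_pos_def subword_def)
  then have parts: "subword C i j = take n w" "subword C i' j' = drop d w"
    "subword C i i' = take d w" "subword C j j' = drop n w"
    using assms(4-6) by (simp_all add: w_def n_def d_def take_subword drop_subword)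
  have "reduced w"
    unfolding w_def using reduced_if_is_string[OF assms(2)] by (rule reduced_subword)
  moreover have "0 < d" "d \<le> n"
    using assms(4,5) by (simp_all add: n_def d_def)
  ultimately show ?thesis
    using reduced_overlap_periodic \<open>length w = n + d\<close> equal_or_inverse unfolding parts by blast
qed

end
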